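(* Let $n$ be a prime, let $\alpha$ be a primitive element of $\mathbb{F}_{2^n}$, identify $\mathbb{F}_2^n$ with $\mathbb{F}_{2^n}$ as $\mathbb{F}_2$-vector spaces, and let $k\ge 2$. Suppose there exists a Steiner structure $\mathbb{S}_2[2,k,n]$ formed by $\frac{2^n-2}{(2^k-1)(2^k-2)n}$ pairwise disjoint coset complete $k$-dimensional subspaces $X_1,\dots,X_N$ (meaning that the set of all subspaces $\alpha^j X_i^{2^\ell}=\{\alpha^j x^{2^\ell}: x\in X_i\}$, $1\le i\le N$, $0\le \ell\le n-1$, $0\le j\le 2^n-2$, is a Steiner structure $\mathbb{S}_2[2,k,n]$). Then there exists a $(2^n-1,2^k-1,1)$ difference family over the group $\mathbb{Z}_{2^n-1}$.
   Context: For $s\in\mathbb{Z}_{2^n-1}$, the cyclotomic coset of $s$ is $C_s=\{s\cdot 2^i \bmod (2^n-1): 0\le i\le n-1\}$ and $\rho(s)=\min C_s$. For a $k$-dimensional subspace $X=\{0,\alpha^{i_1},\dots,\alpha^{i_{2^k-1}}\}$ (exponents in $\mathbb{Z}_{2^n-1}$), $\rho(\Delta(X))=\{\rho(i_r-i_s): r\ne s\}$; $X$ is coset complete if $|\rho(\Delta(X))|=(2^k-1)(2^k-2)$, and coset complete $X,Y$ are disjoint if $\rho(\Delta(X))\cap\rho(\Delta(Y))=\varnothing$. A Steiner structure $\mathbb{S}_2[2,k,n]$ is a set of $k$-dimensional subspaces of $\mathbb{F}_2^n$ such that every $2$-dimensional subspace is contained in exactly one of them. An $(m,w,\lambda)$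 difference family over an additive group $G$ with $|G|=m$ is a set of $w$-subsets of $G$ such that each element of $G\setminus\{0\}$ occurs exactly $\lambda$ times as a difference $a-b$ of two distinct elements $a,b$ lying in a common subset of the family. *)

theory Defs
  imports "HOL-Computational_Algebra.Primes" "HOL-Library.Cardinality"
begin

text \<open>The field F_{2^n} is modelled by a finite field type 'a of cardinality 2^n and
characteristic 2. F_2-subspaces of it (as an F_2-vector space) are exactly the subsets
containing 0 and closed under addition; such a subspace has dimension k iff it has 2^k
elements.\<close>

definition f2_subspace :: "'a::field set \<Rightarrow> bool" where
  "f2_subspace V \<longleftrightarrow> 0 \<in> V \<and> (\<forall>x\<in>V. \<forall>y\<in>V. x + y \<in> V)"

definition f2_subspace_dim :: "'a::{field,finite} set \<Rightarrow> nat \<Rightarrow> bool" where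
  "f2_subspace_dim V k \<longleftrightarrow> f2_subspace V \<and> card V = 2 ^ k"

definition steiner_structure :: "nat \<Rightarrow> 'a::{field,finite} set set \<Rightarrow> bool" where
  "steiner_structure k S \<longleftrightarrow>
     (\<forall>X\<in>S. f2_subspace_dim X k) \<and>
     (\<forall>W. f2_subspace_dim W 2 \<longrightarrow> (\<exists>!X. X \<in> S \<and> W \<subseteq> X))"

definition primitive_elem :: "'a::field \<Rightarrow> bool" where
  "primitive_elem \<alpha> \<longleftrightarrow> \<alpha> \<noteq> 0 \<and> (\<forall>y. y \<noteq> 0 \<longrightarrow> (\<exists>i::nat. y = \<alpha> ^ i))"

definition cyc_rho :: "nat \<Rightarrow> nat \<Rightarrow> nat" where
  "cyc_rho n s = Min {(s * 2 ^ i) mod (2 ^ n - 1) | i. i < n}"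

definition exps :: "nat \<Rightarrow> 'a::field \<Rightarrow> 'a set \<Rightarrow> nat set" where
  "exps n \<alpha> X = {i. i < 2 ^ n - 1 \<and> \<alpha> ^ i \<in> X}"

definition rho_Delta :: "nat \<Rightarrow> 'a::field \<Rightarrow> 'a set \<Rightarrow> nat set" where
  "rho_Delta n \<alpha> X =
     {cyc_rho n (nat ((int i - int j) mod (2 ^ n - 1))) | i j.
        i \<in> exps n \<alpha> X \<and> j \<in> exps n \<alpha> X \<and> i \<noteq> j}"

definition coset_complete :: "nat \<Rightarrow> nat \<Rightarrow> 'a::field \<Rightarrow> 'a set \<Rightarrow> bool" where
  "coset_complete n k \<alpha> X \<longleftrightarrow> card (rho_Delta n \<alpha> X) = (2 ^ k - 1) * (2 ^ k - 2)"

definition difference_family :: "nat \<Rightarrow> nat \<Rightarrow> nat \<Rightarrow> nat set set \<Rightarrow> bool" where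
  "difference_family m w lam F \<longleftrightarrow>
     finite F \<and> (\<forall>B\<in>F. B \<subseteq> {0..<m} \<and> card B = w) \<and>
     (\<forall>g\<in>{1..<m}.
        (\<Sum>B\<in>F. card {(a, b). a \<in> B \<and> b \<in> B \<and> a \<noteq> b \<and>
                               (int a - int b) mod int m = int g}) = lam)"

end

theory Submission
  imports Defs "HOL-Number_Theory.Number_Theory"
begin

text \<open>Let \<open>m = 2\<^sup>n - 1\<close> and let \<open>E\<^sub>i \<subseteq> \<int>\<^sub>m\<close> be the set of exponents of the nonzero
elements of \<open>X\<^sub>i\<close>, so that the Frobenius image \<open>X\<^sub>i\<^bsup>2^l\<^esup>\<close> has exponent set \<open>2\<^sup>l E\<^sub>i\<close>.
The \<open>N n\<close> blocks \<open>2\<^sup>l E\<^sub>i\<close> have pairwise distinct differences: a difference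
\<open>2\<^sup>l (a - b)\<close> lies in the cyclotomic coset of \<open>a - b\<close>, so its coset representative
determines \<open>i\<close> (the sets \<open>\<rho>(\<Delta>(X\<^sub>i))\<close> are disjoint) and then \<open>(a, b)\<close> (coset completeness);
finally \<open>l\<close> is determined because for prime \<open>n\<close> and \<open>0 < t < n\<close> we have
\<open>gcd(2\<^sup>t - 1, 2\<^sup>n - 1) = 1\<close>, so every nonzero cyclotomic coset has exactly \<open>n\<close> elements.
As \<open>N n (2\<^sup>k - 1)(2\<^sup>k - 2) = m - 1\<close>, these differences exhaust the nonzero residues, each
exactly once.\<close>

subsection \<open>Difference families with \<open>\<lambda> = 1\<close>\<close>

definition distinct_pairs :: "'a set \<Rightarrow> ('a \<times> 'a) set" where
  "distinct_pairs B = {(a, b). a \<in> B \<and> b \<in> B \<and> a \<noteq> b}"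

definition diff_mod :: "nat \<Rightarrow> nat \<Rightarrow> nat \<Rightarrow> nat" where
  "diff_mod m a b = nat ((int a - int b) mod int m)"

lemma finite_distinct_pairs: "finite B \<Longrightarrow> finite (distinct_pairs B)"
  unfolding distinct_pairs_def by (rule finite_subset[of _ "B \<times> B"]) auto

lemma card_distinct_pairs:
  assumes "finite B"
  shows "card (distinct_pairs B) = card B * (card B - 1)"
proof -
  have "distinct_pairs B = (SIGMA a:B. B - {a})"
    unfolding distinct_pairs_def by auto
  then show ?thesis
    using assms by (simp add: card_Diff_singleton)
qed

lemma int_diff_mod: "0 < m \<Longrightarrow> int (diff_mod m a b) = (int a - int b) mod int m"
  unfolding diff_mod_def by simp

lemma diff_mod_eq_iff: "0 < m \<Longrightarrow> diff_mod m a b = g \<longleftrightarrow> (int a - int b) mod int m = int g"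
  by (auto simp: int_diff_mod[symmetric])

lemma diff_mod_bounds:
  assumes "a < m" "b < m" "a \<noteq> b"
  shows "0 < diff_mod m a b" "diff_mod m a b < m"
proof -
  have "(int a - int b) mod int m \<noteq> 0"
  proof
    assume "(int a - int b) mod int m = 0"
    then have "[int a = int b] (mod int m)"
      by (simp add: cong_iff_dvd_diff mod_eq_0_iff_dvd)
    then have "[a = b] (mod m)"
      by (simp add: cong_int_iff)
    then show False
      using assms cong_less_modulus_unique_nat by blast
  qed
  moreover have "0 \<le> (int a - int b) mod int m" "(int a - int b) mod int m < int m"
    using assms(1) by simp_all
  ultimately show "0 < diff_mod m a b" "diff_mod m a b < m"
    unfolding diff_mod_def by linarith+
qed

lemma diff_mod_mult_mod:
  assumes "0 < m"
  shows "diff_mod m (a * c mod m) (b * c mod m) = c * diff_mod m a b mod m"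
proof -
  have "int (diff_mod m (a * c mod m) (b * c mod m)) = (int a * int c - int b * int c) mod int m"
    using assms by (simp add: int_diff_mod of_nat_mod mod_diff_eq)
  also have "\<dots> = int c * ((int a - int b) mod int m) mod int m"
    by (simp add: mod_mult_right_eq algebra_simps)
  also have "\<dots> = int (c * diff_mod m a b mod m)"
    using assms by (simp add: int_diff_mod of_nat_mod)
  finally show ?thesis by simp
qed

lemma inj_on_Sigma_if_disjoint_images:
  assumes "\<And>i. i \<in> I \<Longrightarrow> inj_on (f i) (A i)"
    and "\<And>i j. i \<in> I \<Longrightarrow> j \<in> I \<Longrightarrow> i \<noteq> j \<Longrightarrow> f i ` A i \<inter> f j ` A j = {}"
  shows "inj_on (\<lambda>(i, x). f i x) (Sigma I A)"
proof (rule inj_onI, clarify)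
  fix i x j y
  assume "i \<in> I" "x \<in> A i" "j \<in> I" "y \<in> A j" "f i x = f j y"
  moreover from this have "i = j"
    using assms(2) by blast
  ultimately show "i = j \<and> x = y"
    using assms(1) by (auto dest: inj_onD)
qed

lemma inj_on_index_if_inj_on_Sigma:
  assumes "inj_on (\<lambda>(i, x). f x) (Sigma I A)" "\<And>i. i \<in> I \<Longrightarrow> A i \<noteq> {}"
  shows "inj_on A I"
proof (rule inj_onI)
  fix i j assume "i \<in> I" "j \<in> I" "A i = A j"
  moreover obtain x where "x \<in> A i"
    using assms(2)[OF \<open>i \<in> I\<close>] by blast
  ultimately show "i = j"
    using inj_onD[OF assms(1), of "(i, x)" "(j, x)"] by simp
qed

lemma card_eq_1_if_bij_betw_fibre:
  assumes "bij_betw f S T" "y \<in> T"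
  shows "card {x \<in> S. f x = y} = 1"
proof -
  obtain x where x: "x \<in> S" "f x = y"
    using assms by (auto simp: bij_betw_def)
  then have "{x \<in> S. f x = y} = {x}"
    using assms(1) by (auto simp: bij_betw_def dest: inj_onD)
  then show ?thesis by simp
qed

lemma bij_betw_diff_mod_if_inj:
  fixes B :: "'i \<Rightarrow> nat set"
  assumes "finite I"
    and blocks: "\<And>i. i \<in> I \<Longrightarrow> B i \<subseteq> {0..<m} \<and> card (B i) = w"
    and inj: "inj_on (\<lambda>(i, a, b). diff_mod m a b) (SIGMA i:I. distinct_pairs (B i))"
    and count: "card I * (w * (w - 1)) = m - 1"
  shows "bij_betw (\<lambda>(i, a, b). diff_mod m a b) (SIGMA i:I. distinct_pairs (B i)) {1..<m}"
proof -
  let ?S = "SIGMA i:I. distinct_pairs (B i)"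
  have "finite (B i)" if "i \<in> I" for i
    using blocks[OF that] finite_subset by blast
  then have "card ?S = m - 1"
    using \<open>finite I\<close> blocks count by (simp add: finite_distinct_pairs card_distinct_pairs)
  moreover have "(\<lambda>(i, a, b). diff_mod m a b) ` ?S \<subseteq> {1..<m}"
  proof (clarsimp simp: distinct_pairs_def)
    fix i a b assume "i \<in> I" "a \<in> B i" "b \<in> B i" "a \<noteq> b"
    moreover from this have "a < m" "b < m"
      using blocks by fastforce+
    ultimately show "Suc 0 \<le> diff_mod m a b \<and> diff_mod m a b < m"
      using diff_mod_bounds[of a m b] by (simp add: Suc_le_eq)
  qed
  ultimately show ?thesis
    using inj unfolding bij_betw_def
    by (metis card_atLeastLessThan card_image card_subset_eq finite_atLeastLessThan)
qed

lemma difference_family_if_diff_mod_inj: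
  fixes B :: "'i \<Rightarrow> nat set"
  assumes "finite I"
    and blocks: "\<And>i. i \<in> I \<Longrightarrow> B i \<subseteq> {0..<m} \<and> card (B i) = w"
    and "2 \<le> w"
    and inj: "inj_on (\<lambda>(i, a, b). diff_mod m a b) (SIGMA i:I. distinct_pairs (B i))"
    and count: "card I * (w * (w - 1)) = m - 1"
  shows "difference_family m w 1 (B ` I)"
proof -
  define S where "S = (SIGMA i:I. distinct_pairs (B i))"
  define D where "D = (\<lambda>(i::'i, a, b). diff_mod m a b)"
  have fin: "finite (B i)" if "i \<in> I" for i
    using blocks[OF that] finite_subset by blast
  have bij: "bij_betw D S {1..<m}"
    unfolding S_def D_def using \<open>finite I\<close> blocks inj count by (rule bij_betw_diff_mod_if_inj)
  have "distinct_pairs (B i) \<noteq> {}" if "i \<in> I" for i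
    using blocks[OF that] \<open>2 \<le> w\<close> fin[OF that] card_distinct_pairs by fastforce
  with inj have "inj_on (distinct_pairs \<circ> B) I"
    by (intro inj_on_index_if_inj_on_Sigma[of "\<lambda>(a, b). diff_mod m a b"]) (simp_all add: split_def comp_def)
  then have "inj_on B I"
    by (rule inj_on_imageI2)
  show ?thesis
    unfolding difference_family_def
  proof (intro conjI ballI)
    fix g assume g: "g \<in> {1..<m}"
    have pairs: "{(a, b). a \<in> B i \<and> b \<in> B i \<and> a \<noteq> b \<and> (int a - int b) mod int m = int g}
        = {p \<in> distinct_pairs (B i). diff_mod m (fst p) (snd p) = g}" for i
      using diff_mod_eq_iff[of m] g by (auto simp: distinct_pairs_def)
    have "(\<Sum>C\<in>B ` I. card {(a, b). a \<in> C \<and> b \<in> C \<and> a \<noteq> b \<and> (int a - int b) mod int m = int g})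
        = (\<Sum>i\<in>I. card {p \<in> distinct_pairs (B i). diff_mod m (fst p) (snd p) = g})"
      by (simp add: sum.reindex[OF \<open>inj_on B I\<close>] pairs)
    also have "\<dots> = card (SIGMA i:I. {p \<in> distinct_pairs (B i). diff_mod m (fst p) (snd p) = g})"
      using \<open>finite I\<close> fin by (simp add: finite_distinct_pairs)
    also have "(SIGMA i:I. {p \<in> distinct_pairs (B i). diff_mod m (fst p) (snd p) = g}) = {t \<in> S. D t = g}"
      unfolding S_def D_def by auto
    also have "card \<dots> = 1"
      using bij g by (rule card_eq_1_if_bij_betw_fibre)
    finally show "(\<Sum>C\<in>B ` I. card {(a, b). a \<in> C \<and> b \<in> C \<and> a \<noteq> b \<and> (int a - int b) mod int m = int g}) = 1" .
  next
    show "finite (B ` I)"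
      using \<open>finite I\<close> by simp
  next
    fix C assume "C \<in> B ` I"
    then show "C \<subseteq> {0..<m}" "card C = w"
      using blocks by auto
  qed
qed

subsection \<open>Cyclotomic cosets modulo \<open>2\<^sup>n - 1\<close>\<close>

lemma pow2_cong_if_exponents_cong:
  assumes "[i = j] (mod n)"
  shows "[2 ^ i = 2 ^ j] (mod 2 ^ n - 1 :: nat)"
proof -
  have reduce: "[2 ^ i = 2 ^ (i mod n)] (mod 2 ^ n - 1 :: nat)" for i
  proof -
    have "[2 ^ n = 1] (mod 2 ^ n - 1 :: nat)"
      by (simp add: cong_altdef_nat)
    then have "[(2 ^ n) ^ (i div n) * 2 ^ (i mod n) = 1 ^ (i div n) * 2 ^ (i mod n)] (mod 2 ^ n - 1 :: nat)"
      by (intro cong_mult cong_pow cong_refl)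
    then show ?thesis
      by (simp flip: power_mult power_add)
  qed
  show ?thesis
    using reduce[of i] reduce[of j] assms by (metis cong_def)
qed

lemma coprime_pow2_mersenne: "0 < n \<Longrightarrow> coprime (2 ^ l) (2 ^ n - 1 :: nat)"
  by (simp add: coprime_power_left_iff even_diff_nat)

lemma coprime_mersenne:
  assumes "coprime a b"
  shows "coprime (2 ^ a - 1) (2 ^ b - 1 :: nat)"
proof -
  define e where "e = gcd (2 ^ a - 1) (2 ^ b - 1 :: nat)"
  have "[2 ^ a = 1] (mod e)" "[2 ^ b = 1] (mod e)"
    unfolding e_def by (simp_all add: cong_altdef_nat)
  then have "ord e 2 dvd gcd a b"
    by (simp add: ord_divides')
  then have "ord e 2 = 1"
    using assms by simp
  then have "[2 = 1] (mod e)"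
    by (metis One_nat_def ord_eq_Suc_0_iff)
  then have "e = 1"
    using cong_altdef_nat[of 1 2 e] by simp
  then show ?thesis
    unfolding e_def by (rule coprime_iff_gcd_eq_1[THEN iffD2])
qed

lemma cyclotomic_coset_eq_range:
  assumes "0 < n"
  shows "{(s * 2 ^ i) mod (2 ^ n - 1) | i. i < n} = range (\<lambda>i. (s * 2 ^ i) mod (2 ^ n - 1 :: nat))"
proof
  show "range (\<lambda>i. (s * 2 ^ i) mod (2 ^ n - 1)) \<subseteq> {(s * 2 ^ i) mod (2 ^ n - 1) | i. i < n}"
  proof clarify
    fix i
    have "[2 ^ i = 2 ^ (i mod n)] (mod 2 ^ n - 1 :: nat)"
      by (rule pow2_cong_if_exponents_cong) (simp add: cong_def)
    then have "(s * 2 ^ i) mod (2 ^ n - 1) = (s * 2 ^ (i mod n)) mod (2 ^ n - 1)"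
      by (metis cong_def cong_scalar_left)
    then show "\<exists>j. (s * 2 ^ i) mod (2 ^ n - 1) = (s * 2 ^ j) mod (2 ^ n - 1) \<and> j < n"
      using assms by auto
  qed
qed auto

lemma cyc_rho_cong_pow2_mult:
  assumes "0 < n" "[s' = 2 ^ u * s] (mod 2 ^ n - 1)"
  shows "cyc_rho n s' = cyc_rho n s"
proof -
  let ?m = "2 ^ n - 1 :: nat"
  have shift: "(s' * 2 ^ i) mod ?m = (s * 2 ^ (u + i)) mod ?m" for i
    using cong_scalar_right[OF assms(2), of "2 ^ i"] by (simp add: cong_def power_add ac_simps)
  have unshift: "(s * 2 ^ i) mod ?m = (s' * 2 ^ (i + (n - 1) * u)) mod ?m" for i
  proof -
    have "u + (i + (n - 1) * u) = i + n * u"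
      using assms(1) by (cases n) auto
    then have "[i = u + (i + (n - 1) * u)] (mod n)"
      by (simp only:) (simp add: cong_def)
    then have "[2 ^ i = 2 ^ (u + (i + (n - 1) * u))] (mod ?m)"
      by (rule pow2_cong_if_exponents_cong)
    then show ?thesis
      unfolding shift by (metis cong_def cong_scalar_left)
  qed
  have "range (\<lambda>i. (s' * 2 ^ i) mod ?m) = range (\<lambda>i. (s * 2 ^ i) mod ?m)"
    using shift unshift by (auto simp: image_iff)
  then show ?thesis
    unfolding cyc_rho_def cyclotomic_coset_eq_range[OF assms(1)] by simp
qed

lemma pow2_mult_cong_imp_eq:
  fixes s :: nat
  assumes "prime n" "l < n" "l' < n" "0 < s" "s < 2 ^ n - 1"
    and "[2 ^ l * s = 2 ^ l' * s] (mod 2 ^ n - 1)"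
  shows "l = l'"
proof -
  let ?m = "2 ^ n - 1 :: nat"
  have no_shift: False if "[2 ^ a * s = 2 ^ b * s] (mod ?m)" "a < b" "b < n" for a b
  proof -
    define t where "t = b - a"
    have "2 ^ b = 2 ^ a * (2 ^ t :: nat)"
      using that(2) by (simp add: t_def flip: power_add)
    then have "[2 ^ a * s = 2 ^ a * (2 ^ t * s)] (mod ?m)"
      using that(1) by (simp add: mult.assoc)
    then have "[2 ^ t * s = s] (mod ?m)"
      using assms(1) prime_gt_0_nat coprime_pow2_mersenne cong_mult_lcancel_nat cong_sym by metis
    then have "?m dvd (2 ^ t - 1) * s"
      by (simp add: cong_altdef_nat diff_mult_distrib)
    moreover have "coprime t n"
    proof -
      have "\<not> n dvd t"
        using that(2,3) by (auto simp: t_def dest: dvd_imp_le)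
      then show ?thesis
        using assms(1) prime_imp_coprime coprime_commute by blast
    qed
    ultimately have "?m dvd s"
      using coprime_mersenne coprime_dvd_mult_right_iff coprime_commute by metis
    then show False
      using assms(4,5) nat_dvd_not_less by blast
  qed
  show ?thesis
    using no_shift[of l l'] no_shift[of l' l] assms(2,3,6) cong_sym by (metis linorder_neqE_nat)
qed

lemma inj_on_mult_mod:
  fixes c m :: nat
  assumes "coprime c m"
  shows "inj_on (\<lambda>e. e * c mod m) {0..<m}"
proof
  fix x y assume "x \<in> {0..<m}" "y \<in> {0..<m}" "x * c mod m = y * c mod m"
  then show "x = y"
    using assms cong_mult_rcancel_nat cong_less_modulus_unique_nat
    by (metis atLeastLessThan_iff cong_def)
qed

lemma inj_on_pow2_scaled_diff_mod:
  fixes S :: "('i \<times> nat \<times> nat) set"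
  assumes "prime n"
    and pairs: "\<And>i a b. (i, a, b) \<in> S \<Longrightarrow> a < 2 ^ n - 1 \<and> b < 2 ^ n - 1 \<and> a \<noteq> b"
    and inj: "inj_on (\<lambda>(i, a, b). cyc_rho n (diff_mod (2 ^ n - 1) a b)) S"
  shows "inj_on (\<lambda>((i, a, b), l). 2 ^ l * diff_mod (2 ^ n - 1) a b mod (2 ^ n - 1)) (S \<times> {..<n})"
proof (rule inj_onI, clarify)
  let ?m = "2 ^ n - 1 :: nat"
  fix i a b l i' a' b' l'
  assume eq: "2 ^ l * diff_mod ?m a b mod ?m = 2 ^ l' * diff_mod ?m a' b' mod ?m"
    and mem: "(i, a, b) \<in> S" "l < n" "(i', a', b') \<in> S" "l' < n"
  define s s' where "s = diff_mod ?m a b" and "s' = diff_mod ?m a' b'"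
  have "0 < n"
    using assms(1) prime_gt_0_nat by blast
  have "2 ^ (n - l' + l) * s = 2 ^ (n - l') * (2 ^ l * s)"
    by (simp add: power_add mult.assoc)
  also have "[\<dots> = 2 ^ (n - l') * (2 ^ l' * s')] (mod ?m)"
    using eq unfolding s_def s'_def cong_def by (rule cong_scalar_left[unfolded cong_def])
  also have "2 ^ (n - l') * (2 ^ l' * s') = 2 ^ n * s'"
    using mem(4) by (simp add: mult.assoc flip: power_add)
  also have "[\<dots> = 2 ^ 0 * s'] (mod ?m)"
    by (intro cong_scalar_right pow2_cong_if_exponents_cong) (simp add: cong_def)
  finally have "[s' = 2 ^ (n - l' + l) * s] (mod ?m)"
    by (simp add: cong_sym)
  then have "cyc_rho n s' = cyc_rho n s"
    using \<open>0 < n\<close> cyc_rho_cong_pow2_mult by blast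
  then have "(i, a, b) = (i', a', b')"
    using inj_onD[OF inj _ mem(1,3)] unfolding s_def s'_def by simp
  moreover have "0 < s" "s < ?m"
    using pairs[OF mem(1)] diff_mod_bounds unfolding s_def by auto
  ultimately show "(i, a, b) = (i', a', b') \<and> l = l'"
    using pow2_mult_cong_imp_eq[OF assms(1) mem(2,4)] eq unfolding s_def s'_def cong_def by auto
qed

lemma cyclotomic_difference_family:
  fixes E :: "'i \<Rightarrow> nat set"
  assumes "prime n" "finite I" "2 \<le> w"
    and blocks: "\<And>i. i \<in> I \<Longrightarrow> E i \<subseteq> {0..<2 ^ n - 1} \<and> card (E i) = w"
    and inj: "inj_on (\<lambda>(i, a, b). cyc_rho n (diff_mod (2 ^ n - 1) a b)) (SIGMA i:I. distinct_pairs (E i))"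
    and count: "card I * n * (w * (w - 1)) = 2 ^ n - 2"
  shows "difference_family (2 ^ n - 1) w 1
           ((\<lambda>(i, l). (\<lambda>e. e * 2 ^ l mod (2 ^ n - 1)) ` E i) ` (I \<times> {..<n}))"
proof -
  define m where "m = (2 ^ n - 1 :: nat)"
  define B where "B = (\<lambda>(i, l). (\<lambda>e. e * 2 ^ l mod m) ` E i)"
  define scale where "scale = (\<lambda>((i::'i, a, b), l). ((i, l), a * 2 ^ l mod m, b * 2 ^ l mod m))"
  let ?S = "SIGMA i:I. distinct_pairs (E i)"
  have "0 < n"
    using assms(1) prime_gt_0_nat by blast
  then have "0 < m"
    using one_less_power[of "2::nat" n] by (simp add: m_def)
  have scale_inj: "inj_on (\<lambda>e. e * 2 ^ l mod m) (E i)" if "i \<in> I" for i l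
    using inj_on_mult_mod[OF coprime_pow2_mersenne[OF \<open>0 < n\<close>]] blocks[OF that]
    unfolding m_def by (blast intro: inj_on_subset)
  have "inj_on (\<lambda>((i, a, b), l). 2 ^ l * diff_mod m a b mod m) (?S \<times> {..<n})"
    unfolding m_def using inj
    by (intro inj_on_pow2_scaled_diff_mod[OF assms(1)]) (fastforce simp: distinct_pairs_def dest: blocks)+
  then have "inj_on ((\<lambda>(il, x, y). diff_mod m x y) \<circ> scale) (?S \<times> {..<n})"
    by (rule inj_on_cong[THEN iffD1, rotated]) (auto simp: scale_def diff_mod_mult_mod[OF \<open>0 < m\<close>])
  then have "inj_on (\<lambda>(il, x, y). diff_mod m x y) (scale ` (?S \<times> {..<n}))"
    by (rule inj_on_imageI)
  moreover have "scale ` (?S \<times> {..<n}) = (SIGMA il:I \<times> {..<n}. distinct_pairs (B il))"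
  proof
    show "scale ` (?S \<times> {..<n}) \<subseteq> (SIGMA il:I \<times> {..<n}. distinct_pairs (B il))"
      using scale_inj by (auto simp: scale_def B_def distinct_pairs_def dest: inj_onD)
    show "(SIGMA il:I \<times> {..<n}. distinct_pairs (B il)) \<subseteq> scale ` (?S \<times> {..<n})"
      by (force simp: scale_def B_def distinct_pairs_def image_iff)
  qed
  moreover have "B il \<subseteq> {0..<m} \<and> card (B il) = w" if "il \<in> I \<times> {..<n}" for il
    using that \<open>0 < m\<close> blocks card_image[OF scale_inj] by (auto simp: B_def)
  moreover have "card (I \<times> {..<n}) * (w * (w - 1)) = m - 1"
    using count by (simp add: card_cartesian_product m_def)
  ultimately have "difference_family m w 1 (B ` (I \<times> {..<n}))"
    using difference_family_if_diff_mod_inj[of "I \<times> {..<n}" B m w] \<open>finite I\<close> \<open>2 \<le> w\<close>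
    by simp
  then show ?thesis
    unfolding B_def m_def .
qed

subsection \<open>Exponents with respect to a primitive element\<close>

lemma power_card_minus_one_eq_1:
  fixes a :: "'a::{field,finite}"
  assumes "a \<noteq> 0"
  shows "a ^ (CARD('a) - 1) = 1"
proof -
  let ?U = "UNIV - {0::'a}"
  have "bij_betw (\<lambda>x. a * x) ?U ?U"
    by (rule bij_betwI[where g = "\<lambda>x. x / a"]) (auto simp: assms)
  then have "prod (\<lambda>x. x) ?U = prod (\<lambda>x. a * x) ?U"
    using prod.reindex_bij_betw[of "\<lambda>x. a * x" ?U ?U "\<lambda>x. x"] by simp
  also have "\<dots> = a ^ card ?U * prod (\<lambda>x. x) ?U"
    by (simp add: prod.distrib)
  finally have "a ^ card ?U = 1"
    by (simp add: prod_zero_iff)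
  then show ?thesis
    by (simp add: card_Diff_singleton)
qed

lemma bij_betw_power_primitive_elem:
  fixes \<alpha> :: "'a::{field,finite}"
  assumes "primitive_elem \<alpha>"
  shows "bij_betw (\<lambda>i. \<alpha> ^ i) {..<CARD('a) - 1} (UNIV - {0})"
proof -
  let ?q = "CARD('a) - 1"
  have "\<alpha> \<noteq> 0"
    using assms by (simp add: primitive_elem_def)
  then have order: "\<alpha> ^ ?q = 1"
    by (rule power_card_minus_one_eq_1)
  have "card {0, \<alpha>} \<le> CARD('a)"
    by (rule card_mono) simp_all
  then have "0 < ?q"
    using \<open>\<alpha> \<noteq> 0\<close> by simp
  have image: "(\<lambda>i. \<alpha> ^ i) ` {..<?q} = UNIV - {0}"
  proof
    show "(\<lambda>i. \<alpha> ^ i) ` {..<?q} \<subseteq> UNIV - {0}"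
      using \<open>\<alpha> \<noteq> 0\<close> by auto
    show "UNIV - {0} \<subseteq> (\<lambda>i. \<alpha> ^ i) ` {..<?q}"
    proof
      fix y :: 'a assume "y \<in> UNIV - {0}"
      then obtain i where "y = \<alpha> ^ i"
        using assms by (auto simp: primitive_elem_def)
      also have "\<alpha> ^ i = (\<alpha> ^ ?q) ^ (i div ?q) * \<alpha> ^ (i mod ?q)"
        by (simp flip: power_mult power_add)
      also have "\<dots> = \<alpha> ^ (i mod ?q)"
        by (simp only: order power_one mult_1)
      finally show "y \<in> (\<lambda>i. \<alpha> ^ i) ` {..<?q}"
        using \<open>0 < ?q\<close> by auto
    qed
  qed
  moreover have "card (UNIV - {0::'a}) = card {..<?q}"
    by (simp add: card_Diff_singleton)
  ultimately show ?thesis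
    by (simp add: bij_betw_def eq_card_imp_inj_on)
qed

lemma card_exps:
  fixes \<alpha> :: "'a::{field,finite}"
  assumes "primitive_elem \<alpha>" "CARD('a) = 2 ^ n" "0 \<in> X"
  shows "card (exps n \<alpha> X) = card X - 1"
proof -
  have bij: "bij_betw (\<lambda>i. \<alpha> ^ i) {..<2 ^ n - 1} (UNIV - {0})"
    using bij_betw_power_primitive_elem[OF assms(1)] assms(2) by simp
  then have image: "(\<lambda>i. \<alpha> ^ i) ` exps n \<alpha> X = X - {0}"
    unfolding exps_def bij_betw_def by auto
  have "bij_betw (\<lambda>i. \<alpha> ^ i) (exps n \<alpha> X) (X - {0})"
    by (rule bij_betw_subset[OF bij _ image]) (auto simp: exps_def)
  then show ?thesis
    using assms(3) by (simp add: bij_betw_same_card card_Diff_singleton)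
qed

lemma rho_Delta_eq_image:
  "rho_Delta n \<alpha> X = (\<lambda>(a, b). cyc_rho n (diff_mod (2 ^ n - 1) a b)) ` distinct_pairs (exps n \<alpha> X)"
proof -
  have "int (2 ^ n - 1) = 2 ^ n - 1"
    by (simp add: of_nat_diff)
  then show ?thesis
    unfolding rho_Delta_def diff_mod_def distinct_pairs_def by auto
qed

lemma inj_on_cyc_rho_if_coset_complete:
  assumes "coset_complete n k \<alpha> X" "card (exps n \<alpha> X) = 2 ^ k - 1"
  shows "inj_on (\<lambda>(a, b). cyc_rho n (diff_mod (2 ^ n - 1) a b)) (distinct_pairs (exps n \<alpha> X))"
proof (rule eq_card_imp_inj_on)
  have "finite (exps n \<alpha> X)"
    unfolding exps_def by simp
  then show "finite (distinct_pairs (exps n \<alpha> X))"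
    by (rule finite_distinct_pairs)
  with assms show "card ((\<lambda>(a, b). cyc_rho n (diff_mod (2 ^ n - 1) a b)) ` distinct_pairs (exps n \<alpha> X))
      = card (distinct_pairs (exps n \<alpha> X))"
    by (simp add: coset_complete_def rho_Delta_eq_image card_distinct_pairs \<open>finite (exps n \<alpha> X)\<close> numeral_2_eq_2)
qed

theorem theorem4:
  fixes \<alpha> :: "'a::{field,finite}" and n k N :: nat and X :: "nat \<Rightarrow> 'a set"
  assumes "prime n"
    and "CARD('a) = 2 ^ n"
    and "(1::'a) + 1 = 0"
    and "primitive_elem \<alpha>"
    and "k \<ge> 2"
    and "N * ((2 ^ k - 1) * (2 ^ k - 2) * n) = 2 ^ n - 2"
    and "\<forall>i<N. f2_subspace_dim (X i) k \<and> coset_complete n k \<alpha> (X i)"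
    and "\<forall>i<N. \<forall>j<N. i \<noteq> j \<longrightarrow> rho_Delta n \<alpha> (X i) \<inter> rho_Delta n \<alpha> (X j) = {}"
    and "steiner_structure k
           {(\<lambda>x. \<alpha> ^ j * x ^ (2 ^ l)) ` X i | i l j. i < N \<and> l < n \<and> j < 2 ^ n - 1}"
  shows "\<exists>F. difference_family (2 ^ n - 1) (2 ^ k - 1) 1 F"
proof -
  let ?E = "\<lambda>i. exps n \<alpha> (X i)"
  let ?\<rho> = "\<lambda>(a, b). cyc_rho n (diff_mod (2 ^ n - 1) a b)"
  have "(2::nat) ^ 2 \<le> 2 ^ k"
    using assms(5) by (rule power_increasing) simp
  then have w: "2 \<le> (2::nat) ^ k - 1"
    by simp
  have blocks: "?E i \<subseteq> {0..<2 ^ n - 1} \<and> card (?E i) = 2 ^ k - 1" if "i < N" for i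
    using assms(7) that card_exps[OF assms(4,2)]
    by (auto simp: exps_def f2_subspace_dim_def f2_subspace_def)
  then have "inj_on ?\<rho> (distinct_pairs (?E i))" if "i < N" for i
    using assms(7) that by (blast intro: inj_on_cyc_rho_if_coset_complete)
  moreover have "?\<rho> ` distinct_pairs (?E i) \<inter> ?\<rho> ` distinct_pairs (?E j) = {}"
    if "i < N" "j < N" "i \<noteq> j" for i j
    using assms(8) that by (simp add: rho_Delta_eq_image)
  ultimately have "inj_on (\<lambda>(i, a, b). cyc_rho n (diff_mod (2 ^ n - 1) a b))
      (SIGMA i:{..<N}. distinct_pairs (?E i))"
    using inj_on_Sigma_if_disjoint_images[of "{..<N}" "\<lambda>_. ?\<rho>"] by (simp add: split_def)
  moreover have "card {..<N} * n * ((2 ^ k - 1) * (2 ^ k - 1 - 1)) = 2 ^ n - 2"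
    using assms(6) by (simp add: algebra_simps)
  ultimately show ?thesis
    using cyclotomic_difference_family[OF assms(1) _ w, of "{..<N}" ?E] blocks by blast
qed

end
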